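(* Fix $\varepsilon\in\{1,-1\}$, $m\in\{1,2,5,7,8,10,11,13,14,16,17,19,22,23\}$, and a nonnegative integer $n$ such that $\delta_m(n)$ is squarefree. With $A=18(m+24n)-\varepsilon$, $B=4\varepsilon/9$, $D=-3$, $r=1/3+A^2$, the number $H(m,n)=\frac{1}{16}(2ABD+2A^2Dr+3r^2)$ is an integer.
   Context: Let $f_m(n)=62208n^2+(5184m-432\varepsilon)n+(108m^2-18\varepsilon m+1)$, let $i=1$ if $m$ is odd, $i=2$ if $m$ is even and $m\ne8,16$, and $i=4$ if $m\in\{8,16\}$, and let $\delta_m(n)=2^{1-i}(m+24n)f_m(n)$ (an integer), so that $2(m+24n)f_m(n)=2^i\delta_m(n)$. *)

theory Defs
  imports Complex_Main "HOL-Computational_Algebra.Squarefree"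
begin

definition f_poly :: "int \<Rightarrow> int \<Rightarrow> int \<Rightarrow> int" where
  "f_poly eps m n = 62208 * n^2 + (5184 * m - 432 * eps) * n + (108 * m^2 - 18 * eps * m + 1)"

definition i_exp :: "int \<Rightarrow> nat" where
  "i_exp m = (if odd m then 1 else if m \<in> {8, 16} then 4 else 2)"

text \<open>delta_m(n) = 2^(1-i) (m+24n) f_m(n), i.e. the integer with 2^i delta = 2(m+24n) f_m(n).\<close>
definition delta :: "int \<Rightarrow> int \<Rightarrow> int \<Rightarrow> int" where
  "delta eps m n = (2 * (m + 24 * n) * f_poly eps m n) div 2 ^ i_exp m"

definition H :: "int \<Rightarrow> int \<Rightarrow> int \<Rightarrow> rat" where
  "H eps m n = (let A = 18 * of_int (m + 24 * n) - of_int eps :: rat;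
                    B = 4 * of_int eps / 9 :: rat;
                    D = -3 :: rat;
                    r = 1/3 + A^2
                in (2 * A * B * D + 2 * A^2 * D * r + 3 * r^2) / 16)"

end

theory Submission
  imports Defs
begin

text \<open>With \<open>k = m + 24n\<close> and \<open>A = 18k - \<epsilon>\<close>, clearing denominators gives
  \<open>H = (1 - 8A\<epsilon> - 9A\<^sup>4)/48\<close>, and \<open>\<epsilon>\<^sup>2 = 1\<close> turns the numerator into
  \<open>-144k\<epsilon> - 9(A\<^sup>4 - 1)\<close>. Since \<open>A\<close> is odd, \<open>A\<^sup>4 \<equiv> 1 (mod 16)\<close>, so \<open>48\<close> divides it.\<close>

lemma sixteen_dvd_odd_power4_minus_1:
  fixes a :: int
  assumes "odd a"
  shows "16 dvd a ^ 4 - 1"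
proof -
  obtain b where a: "a = 2 * b + 1"
    using assms oddE by blast
  obtain c where c: "b * (b + 1) = 2 * c"
    by (metis evenE even_mult_iff even_plus_one_iff)
  have "a ^ 4 - 1 = 8 * (b * (b + 1)) * (2 * b\<^sup>2 + 2 * b + 1)"
    unfolding a by algebra
  also have "\<dots> = 16 * (c * (2 * b\<^sup>2 + 2 * b + 1))"
    unfolding c by simp
  finally show ?thesis
    by simp
qed

lemma H_eq:
  "H eps m n = of_int (1 - 8 * (18 * (m + 24 * n) - eps) * eps - 9 * (18 * (m + 24 * n) - eps) ^ 4) / 48"
  unfolding H_def Let_def by (simp add: field_simps power2_eq_square power4_eq_xxxx)

theorem lemma3p1:
  fixes eps m :: int and n :: nat
  assumes "eps \<in> {1, -1}"
    and "m \<in> {1, 2, 5, 7, 8, 10, 11, 13, 14, 16, 17, 19, 22, 23}"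
    and "squarefree (delta eps m (int n))"
  shows "H eps m (int n) \<in> \<int>"
proof -
  define k where "k = m + 24 * int n"
  have eps_sq: "eps * eps = 1" and "odd (18 * k - eps)"
    using assms(1) by auto
  then obtain q where q: "(18 * k - eps) ^ 4 = 16 * q + 1"
    using sixteen_dvd_odd_power4_minus_1 by (metis dvd_def diff_add_cancel add.commute)
  have "1 - 8 * (18 * k - eps) * eps - 9 * (18 * k - eps) ^ 4 = 48 * (- 3 * k * eps - 3 * q)"
    unfolding q by (simp add: algebra_simps eps_sq)
  then have "H eps m (int n) = of_int (- 3 * k * eps - 3 * q)"
    unfolding H_eq k_def[symmetric] by simp
  then show ?thesis
    by simp
qed

end
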